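(* For every $\theta>0$ there exists $C>0$ such that for all $n\in\mathbb{Z}^2$, all $\mu\in\mathbb{Z}$ and all dyadic $N_1,N_2,N_3\ge1$, $$\big|\Gamma^-_\mu(n)\cap\{|n_1|\sim N_1,\ |n_3|\sim N_3\}\big|\le C N_1N_3\max(N_1,N_3)^\theta,$$ $$\big|\Gamma^-_\mu(n)\cap\{|n_1|\sim N_1,\ |n_2|\sim N_2\}\big|\le C N_1N_2\max(N_1,N_2)^\theta.$$
   Context: For $n=(j,k)\in\mathbb{Z}^2$ let $|n|_-^2=j^2-k^2$ (hyperbolic modulus). For $n\in\mathbb{Z}^2$, $\Gamma(n)=\{(n_1,n_2,n_3)\in(\mathbb{Z}^2)^3: n_1-n_2+n_3=n,\ n\ne n_1,\ n\ne n_3\}$, and for $\mu\in\mathbb{Z}$, $\Gamma^-_\mu(n)=\{(n_1,n_2,n_3)\in\Gamma(n): |n|_-^2-|n_1|_-^2+|n_2|_-^2-|n_3|_-^2=\mu\}$. For dyadic $N\ge1$, $|m|\sim N$ means $\frac12N\le|m|<2N$ if $N\ge2$, and $|m|<2$ if $N=1$ ($|\cdot|$ the Euclidean norm). *)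

theory Defs
  imports Complex_Main
begin

type_synonym pt = "int \<times> int"

definition hmod2 :: "pt \<Rightarrow> int" where
  "hmod2 m = (fst m)^2 - (snd m)^2"

definition enorm :: "pt \<Rightarrow> real" where
  "enorm m = sqrt (real_of_int ((fst m)^2 + (snd m)^2))"

definition dyadic :: "real \<Rightarrow> bool" where
  "dyadic N \<longleftrightarrow> (\<exists>k::nat. N = 2 ^ k)"

definition sim :: "pt \<Rightarrow> real \<Rightarrow> bool" where
  "sim m N = (if N \<ge> 2 then N / 2 \<le> enorm m \<and> enorm m < 2 * N else enorm m < 2)"

definition Gamma :: "pt \<Rightarrow> (pt \<times> pt \<times> pt) set" where
  "Gamma n = {(n1, n2, n3). fst n1 - fst n2 + fst n3 = fst n \<and>
      snd n1 - snd n2 + snd n3 = snd n \<and> n \<noteq> n1 \<and> n \<noteq> n3}"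

definition Gamma_minus :: "int \<Rightarrow> pt \<Rightarrow> (pt \<times> pt \<times> pt) set" where
  "Gamma_minus \<mu> n = {(n1, n2, n3) \<in> Gamma n.
      hmod2 n - hmod2 n1 + hmod2 n2 - hmod2 n3 = \<mu>}"

end

theory Submission
  imports Defs "HOL-Library.Product_Plus" "HOL-Analysis.Convex"
begin

text \<open>
  Write \<open>hdot x y = x\<^sub>1 y\<^sub>1 - x\<^sub>2 y\<^sub>2\<close> for the form polarising \<open>|.|\<^sup>2\<^sub>-\<close>. Eliminating one
  frequency, \<open>\<Gamma>\<^sup>-\<^sub>\<mu>(n)\<close> becomes the set of pairs \<open>(n\<^sub>1, n\<^sub>3)\<close> with
  \<open>2 hdot (n\<^sub>1 - n) (n\<^sub>3 - n) = \<mu>\<close>, or of pairs \<open>(n\<^sub>1, n\<^sub>2)\<close> with \<open>2 hdot (n\<^sub>1 - n) (n\<^sub>2 - n\<^sub>1) = \<mu>\<close>.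
  Fixing the frequency from the smaller box, the other one lies on a line with normal \<open>w\<close>, and a
  line meets a box of side \<open>2R\<close> in at most \<open>1 + 2R gcd(w) / |w|\<^sub>\<infinity>\<close> lattice points. Grouping
  the normals by primitive direction shows that \<open>gcd(w) / |w|\<^sub>\<infinity>\<close> sums to \<open>O(r log\<^sup>2 r)\<close> over a
  box of side \<open>2r\<close>, which gives the bound up to a logarithm.

  The one case that is not linear, \<open>(n\<^sub>1, n\<^sub>2)\<close> with \<open>n\<^sub>1\<close> in the larger box, becomes linear
  after Cauchy-Schwarz: \<open>u = 2 n\<^sub>1 - n\<^sub>2\<close> and \<open>v = n\<^sub>2\<close> satisfy
  \<open>|u - n|\<^sup>2\<^sub>- + 2\<mu> = |v - n|\<^sup>2\<^sub>-\<close>, and the number of collisions \<open>|u - n|\<^sup>2\<^sub>- = |u' - n|\<^sup>2\<^sub>-\<close> in a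
  box is again an incidence count, \<open>u'\<close> lying on a line determined by \<open>u - u'\<close>. Finally the
  logarithmic losses are absorbed into \<open>max(N\<^sub>1, N\<^sub>3)\<^sup>\<theta>\<close>.
\<close>

section \<open>The hyperbolic form and the resonant set\<close>

definition hdot :: "pt \<Rightarrow> pt \<Rightarrow> int" where
  "hdot x y = fst x * fst y - snd x * snd y"

lemma hdot_commute: "hdot x y = hdot y x"
  unfolding hdot_def by (simp add: mult.commute)

lemma hdot_diff_right: "hdot x (y - z) = hdot x y - hdot x z"
  unfolding hdot_def by (simp add: algebra_simps)

lemma hmod2_add: "hmod2 (x + y) = hmod2 x + 2 * hdot x y + hmod2 y"
  unfolding hmod2_def hdot_def by (simp add: power2_eq_square algebra_simps)

lemma hmod2_add_minus_diff: "hmod2 (x + y) - hmod2 (x - y) = 4 * hdot x y"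
  unfolding hmod2_def hdot_def by (simp add: power2_eq_square algebra_simps)

lemma Gamma_minus_iff:
  "(n1, n2, n3) \<in> Gamma_minus \<mu> n \<longleftrightarrow>
    n2 = n1 + n3 - n \<and> n1 \<noteq> n \<and> n3 \<noteq> n \<and> 2 * hdot (n1 - n) (n3 - n) = \<mu>"
proof -
  have "hmod2 n - hmod2 n1 + hmod2 (n1 + n3 - n) - hmod2 n3 = 2 * hdot (n1 - n) (n3 - n)"
    unfolding hmod2_def hdot_def by (simp add: power2_eq_square algebra_simps)
  moreover have "fst n1 - fst n2 + fst n3 = fst n \<and> snd n1 - snd n2 + snd n3 = snd n \<longleftrightarrow> n2 = n1 + n3 - n"
    by (auto simp: prod_eq_iff)
  ultimately show ?thesis
    unfolding Gamma_minus_def Gamma_def by auto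
qed

lemma card_Gamma_minus_eq_n1_n3:
  "card {(n1, n2, n3) \<in> Gamma_minus \<mu> n. P n1 n3}
    = card {(x, y). x \<noteq> n \<and> y \<noteq> n \<and> 2 * hdot (x - n) (y - n) = \<mu> \<and> P x y}"
proof -
  have "{(n1, n2, n3) \<in> Gamma_minus \<mu> n. P n1 n3}
      = (\<lambda>(x, y). (x, x + y - n, y)) ` {(x, y). x \<noteq> n \<and> y \<noteq> n \<and> 2 * hdot (x - n) (y - n) = \<mu> \<and> P x y}"
    by (force simp: Gamma_minus_iff)
  then show ?thesis
    by (simp add: card_image inj_on_def)
qed

lemma card_Gamma_minus_eq_n1_n2:
  "card {(n1, n2, n3) \<in> Gamma_minus \<mu> n. P n1 n2}
    = card {(x, y). x \<noteq> n \<and> y \<noteq> x \<and> 2 * hdot (x - n) (y - x) = \<mu> \<and> P x y}"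
proof -
  have iff: "(n1, n2, n3) \<in> Gamma_minus \<mu> n \<longleftrightarrow>
      n3 = n2 - n1 + n \<and> n1 \<noteq> n \<and> n2 \<noteq> n1 \<and> 2 * hdot (n1 - n) (n2 - n1) = \<mu>" for n1 n2 n3
  proof -
    have "n2 = n1 + n3 - n \<longleftrightarrow> n3 = n2 - n1 + n"
      by (auto simp: algebra_simps)
    then show ?thesis
      unfolding Gamma_minus_iff by auto
  qed
  have "{(n1, n2, n3) \<in> Gamma_minus \<mu> n. P n1 n2}
      = (\<lambda>(x, y). (x, y, y - x + n)) ` {(x, y). x \<noteq> n \<and> y \<noteq> x \<and> 2 * hdot (x - n) (y - x) = \<mu> \<and> P x y}"
    (is "?L = ?f ` ?R")
  proof (intro set_eqI iffI)
    fix t assume "t \<in> ?L"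
    then obtain x y where "t = ?f (x, y)" "(x, y) \<in> ?R"
      using iff by (cases t) auto
    then show "t \<in> ?f ` ?R"
      by blast
  next
    fix t assume "t \<in> ?f ` ?R"
    then show "t \<in> ?L"
      using iff by auto
  qed
  then show ?thesis
    by (simp add: card_image inj_on_def)
qed

section \<open>Lattice points in boxes and on lines\<close>

definition int_cball :: "real \<Rightarrow> real \<Rightarrow> int set" where
  "int_cball a r = {t. \<bar>real_of_int t - a\<bar> \<le> r}"

lemma int_cball_eq_atLeastAtMost: "int_cball a r = {\<lceil>a - r\<rceil>..\<lfloor>a + r\<rfloor>}"
  unfolding int_cball_def by (auto simp: abs_le_iff ceiling_le_iff le_floor_iff)

lemma finite_int_cball [simp]: "finite (int_cball a r)"
  unfolding int_cball_eq_atLeastAtMost by simp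

lemma card_int_cball_le:
  assumes "0 \<le> r"
  shows "real (card (int_cball a r)) \<le> 2 * r + 1"
proof -
  have "real (card (int_cball a r)) = max 0 (real_of_int (\<lfloor>a + r\<rfloor> - \<lceil>a - r\<rceil> + 1))"
    unfolding int_cball_eq_atLeastAtMost by simp
  also have "\<dots> \<le> 2 * r + 1"
    using assms of_int_floor_le[of "a + r"] le_of_int_ceiling[of "a - r"] by linarith
  finally show ?thesis .
qed

lemma int_cball_scaled:
  assumes "q \<noteq> 0"
  shows "{t. q * t \<in> int_cball a r} = int_cball (a / q) (r / \<bar>q\<bar>)"
proof -
  have "\<bar>real_of_int (q * t) - a\<bar> = \<bar>real_of_int q\<bar> * \<bar>real_of_int t - a / q\<bar>" for t
    using assms by (simp add: abs_mult [symmetric] algebra_simps)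
  then show ?thesis
    using assms by (auto simp: int_cball_def field_simps)
qed

lemma card_inj_on_multiples_in_int_cball_le:
  assumes "inj_on t L" "q \<noteq> 0" "0 \<le> r" "\<And>x. x \<in> L \<Longrightarrow> q * t x \<in> int_cball a r"
  shows "real (card L) \<le> 2 * r / \<bar>q\<bar> + 1"
proof -
  have "t ` L \<subseteq> {s. q * s \<in> int_cball a r}"
    using assms(4) by auto
  also have "\<dots> = int_cball (a / q) (r / \<bar>q\<bar>)"
    using assms(2) by (rule int_cball_scaled)
  finally have "card (t ` L) \<le> card (int_cball (a / q) (r / \<bar>q\<bar>))"
    by (rule card_mono[rotated]) simp
  then have "real (card L) \<le> real (card (int_cball (a / q) (r / \<bar>q\<bar>)))"
    using assms(1) by (simp add: card_image)
  also have "\<dots> \<le> 2 * (r / \<bar>q\<bar>) + 1"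
    using assms(3) by (intro card_int_cball_le) simp
  finally show ?thesis
    by simp
qed

definition lattice_box :: "pt \<Rightarrow> real \<Rightarrow> pt set" where
  "lattice_box c r = int_cball (fst c) r \<times> int_cball (snd c) r"

lemma mem_lattice_box:
  "x \<in> lattice_box c r \<longleftrightarrow> \<bar>real_of_int (fst x - fst c)\<bar> \<le> r \<and> \<bar>real_of_int (snd x - snd c)\<bar> \<le> r"
  unfolding lattice_box_def int_cball_def by (cases x) auto

lemma finite_lattice_box [simp]: "finite (lattice_box c r)"
  unfolding lattice_box_def by simp

lemma card_lattice_box_le:
  assumes "1 \<le> r"
  shows "real (card (lattice_box c r)) \<le> 9 * r^2"
proof -
  have side: "real (card (int_cball a r)) \<le> 3 * r" for a
    using assms card_int_cball_le[of r a] by linarith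
  have "real (card (lattice_box c r)) \<le> (3 * r) * (3 * r)"
    unfolding lattice_box_def card_cartesian_product of_nat_mult
    using assms by (intro mult_mono side) auto
  then show ?thesis
    by (simp add: power2_eq_square)
qed

lemma swap_lattice_box: "prod.swap ` lattice_box c r = lattice_box (prod.swap c) r"
  unfolding lattice_box_def by (simp add: product_swap)

lemma diff_mem_lattice_box:
  "x \<in> lattice_box c r \<Longrightarrow> y \<in> lattice_box d s \<Longrightarrow> x - y \<in> lattice_box (c - d) (r + s)"
  unfolding mem_lattice_box by (simp add: abs_le_iff)

lemma add_mem_lattice_box:
  "x \<in> lattice_box c r \<Longrightarrow> y \<in> lattice_box d s \<Longrightarrow> x + y \<in> lattice_box (c + d) (r + s)"
  unfolding mem_lattice_box by (simp add: abs_le_iff)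

lemma image_diff_lattice_box: "(\<lambda>x. x - n) ` lattice_box c r = lattice_box (c - n) r"
proof -
  have "y \<in> (\<lambda>x. x - n) ` lattice_box c r" if "y \<in> lattice_box (c - n) r" for y
    using that by (intro image_eqI[of _ _ "y + n"]) (auto simp: mem_lattice_box)
  then show ?thesis by (auto simp: mem_lattice_box)
qed

definition line_density :: "pt \<Rightarrow> real" where
  "line_density w = real_of_int (gcd (fst w) (snd w)) / real_of_int (max \<bar>fst w\<bar> \<bar>snd w\<bar>)"

lemma div_gcd_dvd_of_linear_eq:
  fixes a b :: int
  assumes "a * x + b * y = a * x' + b * y'" "b \<noteq> 0"
  shows "b div gcd a b dvd x - x'"
proof -
  define g where "g = gcd a b"
  have g: "0 < g" "a = g * (a div g)" "b = g * (b div g)"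
    using assms(2) unfolding g_def by simp_all
  have "a * (x - x') = b * (y' - y)"
    using assms(1) by (simp add: algebra_simps)
  then have "g * ((a div g) * (x - x')) = g * ((b div g) * (y' - y))"
    by (simp only: mult.assoc[symmetric] g(2,3)[symmetric])
  then have "b div g dvd (a div g) * (x - x')"
    using g(1) by simp
  moreover have "coprime (a div g) (b div g)"
    unfolding g_def using assms(2) by (simp add: div_gcd_coprime)
  ultimately show ?thesis
    unfolding g_def by (simp add: coprime_commute coprime_dvd_mult_right_iff)
qed

lemma card_line_lattice_box_le_gcd_div:
  fixes a b k :: int
  assumes "b \<noteq> 0" "0 \<le> r"
  shows "real (card {x \<in> lattice_box c r. a * fst x + b * snd x = k}) \<le> 1 + 2 * r * gcd a b / \<bar>b\<bar>"
proof (cases "{x \<in> lattice_box c r. a * fst x + b * snd x = k} = {}")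
  case True
  show ?thesis
    unfolding True using assms by simp
next
  case False
  define L where "L = {x \<in> lattice_box c r. a * fst x + b * snd x = k}"
  obtain x0 where x0: "x0 \<in> L"
    using False unfolding L_def by blast
  define q where "q = b div gcd a b"
  have q: "q \<noteq> 0" "real_of_int \<bar>q\<bar> = \<bar>b\<bar> / gcd a b"
    using assms(1) unfolding q_def by (simp_all add: dvd_div_eq_0_iff abs_div real_of_int_div)
  \<comment> \<open>Along the line, the first coordinate runs through a progression of step \<open>q\<close>.\<close>
  define t where "t x = (fst x - fst x0) div q" for x :: pt
  have fst_eq: "fst x = fst x0 + q * t x" if "x \<in> L" for x
    using div_gcd_dvd_of_linear_eq[of a "fst x" b "snd x" "fst x0" "snd x0"] that x0 assms(1)
    unfolding t_def q_def L_def by simp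
  have "inj_on fst L"
    unfolding L_def using assms(1) by (intro inj_onI) (auto simp: prod_eq_iff)
  have "inj_on t L"
  proof (rule inj_onI)
    fix x y assume "x \<in> L" "y \<in> L" "t x = t y"
    with \<open>inj_on fst L\<close> show "x = y"
      using fst_eq by (metis inj_onD)
  qed
  have "real (card L) \<le> 2 * r / \<bar>q\<bar> + 1"
  proof (rule card_inj_on_multiples_in_int_cball_le[OF \<open>inj_on t L\<close> q(1) assms(2)])
    fix x assume x: "x \<in> L"
    have "q * t x = fst x - fst x0"
      using fst_eq[OF x] by simp
    moreover have "\<bar>real_of_int (fst x - fst c)\<bar> \<le> r"
      using x unfolding L_def mem_lattice_box by simp
    ultimately show "q * t x \<in> int_cball (fst c - fst x0) r"
      unfolding int_cball_def by (simp add: abs_minus_commute)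
  qed
  also have "2 * r / \<bar>q\<bar> = 2 * r * gcd a b / \<bar>b\<bar>"
    unfolding q(2) using assms(1) by simp
  finally show ?thesis
    unfolding L_def by simp
qed

lemma card_line_lattice_box_le:
  fixes a b k :: int
  assumes "(a, b) \<noteq> 0" "0 \<le> r"
  shows "real (card {x \<in> lattice_box c r. a * fst x + b * snd x = k}) \<le> 1 + 2 * r * line_density (a, b)"
proof (cases "\<bar>a\<bar> \<le> \<bar>b\<bar>")
  case True
  then have "b \<noteq> 0"
    using assms(1) by (auto simp: zero_prod_def)
  with True show ?thesis
    using card_line_lattice_box_le_gcd_div[OF _ assms(2)] by (simp add: line_density_def max_def)
next
  case False
  then have "a \<noteq> 0"
    by auto
  have "{x \<in> lattice_box c r. a * fst x + b * snd x = k}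
      = prod.swap ` {y \<in> lattice_box (prod.swap c) r. b * fst y + a * snd y = k}"
    by (force simp flip: swap_lattice_box)
  then have "card {x \<in> lattice_box c r. a * fst x + b * snd x = k}
      = card {y \<in> lattice_box (prod.swap c) r. b * fst y + a * snd y = k}"
    by (simp add: card_image)
  with False \<open>a \<noteq> 0\<close> show ?thesis
    using card_line_lattice_box_le_gcd_div[OF _ assms(2), where a=b and b=a and c="prod.swap c" and k=k]
    by (simp add: line_density_def max_def gcd.commute)
qed

lemma line_density_conj: "line_density (fst w, - snd w) = line_density w"
  unfolding line_density_def by simp

lemma card_hdot_line_lattice_box_le:
  assumes "w \<noteq> 0" "0 \<le> R"
  shows "real (card {b \<in> lattice_box c R. hdot w b = k}) \<le> 1 + 2 * R * line_density w"
proof -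
  have "(fst w, - snd w) \<noteq> 0"
    using assms(1) by (auto simp: zero_prod_def prod_eq_iff)
  then have "real (card {b \<in> lattice_box c R. fst w * fst b + - snd w * snd b = k})
      \<le> 1 + 2 * R * line_density (fst w, - snd w)"
    using assms(2) by (rule card_line_lattice_box_le)
  then show ?thesis
    unfolding hdot_def line_density_conj by simp
qed

section \<open>Summing line densities over a box\<close>

definition supnorm :: "pt \<Rightarrow> int" where
  "supnorm p = max \<bar>fst p\<bar> \<bar>snd p\<bar>"

definition primitive_part :: "pt \<Rightarrow> pt" where
  "primitive_part x = (fst x div gcd (fst x) (snd x), snd x div gcd (fst x) (snd x))"

lemma gcd_mult_primitive_part:
  "fst x = gcd (fst x) (snd x) * fst (primitive_part x)"
  "snd x = gcd (fst x) (snd x) * snd (primitive_part x)"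
  unfolding primitive_part_def by simp_all

lemma supnorm_primitive_part_ge_1:
  assumes "x \<noteq> 0"
  shows "1 \<le> supnorm (primitive_part x)"
proof -
  have "primitive_part x \<noteq> 0"
    using assms gcd_mult_primitive_part[of x] by (auto simp: zero_prod_def prod_eq_iff)
  then show ?thesis
    by (auto simp: supnorm_def zero_prod_def prod_eq_iff)
qed

lemma line_density_eq_inverse_supnorm:
  assumes "x \<noteq> 0"
  shows "line_density x = 1 / supnorm (primitive_part x)"
proof -
  define g where "g = gcd (fst x) (snd x)"
  have "0 < g"
    using assms unfolding g_def by (cases x) (auto simp: zero_prod_def)
  moreover have "\<bar>fst x\<bar> = g * \<bar>fst (primitive_part x)\<bar>" "\<bar>snd x\<bar> = g * \<bar>snd (primitive_part x)\<bar>"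
    using gcd_mult_primitive_part[of x] \<open>0 < g\<close> unfolding g_def by (metis abs_mult abs_of_pos)+
  then have "max \<bar>fst x\<bar> \<bar>snd x\<bar> = g * supnorm (primitive_part x)"
    using \<open>0 < g\<close> unfolding supnorm_def by (simp add: max_mult_distrib_left)
  ultimately show ?thesis
    unfolding line_density_def g_def[symmetric] by simp
qed

lemma card_primitive_part_fibre_le:
  assumes "p \<noteq> 0" "0 \<le> r"
  shows "real (card {x \<in> lattice_box c r - {0}. primitive_part x = p}) \<le> 2 * r / supnorm p + 1"
proof -
  define F where "F = {x \<in> lattice_box c r - {0}. primitive_part x = p}"
  define g where "g x = gcd (fst x) (snd x)" for x :: pt
  have coords: "fst x = g x * fst p" "snd x = g x * snd p" if "x \<in> F" for x
    using that gcd_mult_primitive_part[of x] unfolding F_def g_def by auto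
  have "inj_on g F"
    by (rule inj_onI) (metis coords prod_eq_iff)
  obtain \<pi> :: "pt \<Rightarrow> int" where \<pi>: "\<pi> = fst \<or> \<pi> = snd" "\<bar>\<pi> p\<bar> = supnorm p"
    by (cases "\<bar>snd p\<bar> \<le> \<bar>fst p\<bar>") (auto simp: supnorm_def)
  have "\<pi> p \<noteq> 0"
    using \<pi> assms(1) by (cases p) (auto simp: supnorm_def zero_prod_def)
  have "real (card F) \<le> 2 * r / \<bar>\<pi> p\<bar> + 1"
  proof (rule card_inj_on_multiples_in_int_cball_le[OF \<open>inj_on g F\<close> \<open>\<pi> p \<noteq> 0\<close> assms(2)])
    fix x assume x: "x \<in> F"
    then have "\<bar>real_of_int (\<pi> x - \<pi> c)\<bar> \<le> r"
      using \<pi>(1) unfolding F_def by (auto simp: mem_lattice_box)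
    moreover have "\<pi> x = \<pi> p * g x"
      using \<pi>(1) coords[OF x] by (auto simp: mult.commute)
    ultimately show "\<pi> p * g x \<in> int_cball (\<pi> c) r"
      unfolding int_cball_def by simp
  qed
  then show ?thesis
    unfolding F_def \<pi>(2) .
qed

definition log_factor :: "real \<Rightarrow> real" where
  "log_factor r = (1 + 2 * ln (r + 1))^2"

lemma log_factor_ge_1: "0 \<le> r \<Longrightarrow> 1 \<le> log_factor r"
  unfolding log_factor_def by simp

lemma log_factor_mono: "0 \<le> r \<Longrightarrow> r \<le> s \<Longrightarrow> log_factor r \<le> log_factor s"
  unfolding log_factor_def by (intro power_mono) auto

lemma mult_log_factor_mono:
  assumes "0 \<le> x" "0 \<le> a" "a \<le> b" "0 \<le> r" "r \<le> s"
  shows "a * x * log_factor r \<le> b * x * log_factor s"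
  using assms log_factor_ge_1[OF assms(4)] log_factor_mono[OF assms(4,5)]
  by (intro mult_mono mult_right_mono) auto

lemma sum_inverse_abs_add_one_le: "(\<Sum>t\<in>{-int m..int m}. 1 / (\<bar>real_of_int t\<bar> + 1)) \<le> 1 + 2 * ln (real m + 1)"
proof (induction m)
  case 0
  then show ?case
    by simp
next
  case (Suc m)
  have "ln ((real m + 1) / (real m + 2)) \<le> (real m + 1) / (real m + 2) - 1"
    by (rule ln_le_minus_one) simp
  then have ln_step: "1 / (real m + 2) \<le> ln (real m + 2) - ln (real m + 1)"
    by (simp add: ln_div field_simps)
  have "{-int (Suc m)..int (Suc m)} = insert (-int m - 1) (insert (int m + 1) {-int m..int m})"
    by auto
  then have "(\<Sum>t\<in>{-int (Suc m)..int (Suc m)}. 1 / (\<bar>real_of_int t\<bar> + 1))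
      = 2 / (real m + 2) + (\<Sum>t\<in>{-int m..int m}. 1 / (\<bar>real_of_int t\<bar> + 1))"
    by simp
  also have "\<dots> \<le> 1 + 2 * ln (real (Suc m) + 1)"
    using Suc.IH ln_step by (simp add: add.commute)
  finally show ?case .
qed

lemma sum_inverse_abs_add_one_int_cball_le:
  assumes "0 \<le> r"
  shows "(\<Sum>t\<in>int_cball 0 r. 1 / (\<bar>real_of_int t\<bar> + 1)) \<le> 1 + 2 * ln (r + 1)"
proof -
  define m where "m = nat \<lfloor>r\<rfloor>"
  have "int_cball 0 r = {-int m..int m}"
    using assms unfolding int_cball_eq_atLeastAtMost m_def by (simp add: ceiling_minus)
  moreover have "ln (real m + 1) \<le> ln (r + 1)"
    using assms of_int_floor_le[of r] unfolding m_def by (subst ln_le_cancel_iff) (auto simp: add_nonneg_pos)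
  ultimately show ?thesis
    using sum_inverse_abs_add_one_le[of m] by simp
qed

lemma inverse_supnorm_sq_le:
  assumes "p \<noteq> 0"
  shows "1 / real_of_int (supnorm p)^2 \<le> 4 / ((\<bar>real_of_int (fst p)\<bar> + 1) * (\<bar>real_of_int (snd p)\<bar> + 1))"
proof -
  define s where "s = real_of_int (supnorm p)"
  have "1 \<le> s"
    using assms unfolding s_def supnorm_def by (cases p) (auto simp: zero_prod_def)
  have "(\<bar>real_of_int (fst p)\<bar> + 1) * (\<bar>real_of_int (snd p)\<bar> + 1) \<le> (s + 1) * (s + 1)"
    unfolding s_def supnorm_def by (intro mult_mono) auto
  also have "\<dots> \<le> (2 * s) * (2 * s)"
    using \<open>1 \<le> s\<close> by (intro mult_mono) auto
  also have "\<dots> = 4 * s^2"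
    by (simp add: power2_eq_square)
  finally have "(\<bar>real_of_int (fst p)\<bar> + 1) * (\<bar>real_of_int (snd p)\<bar> + 1) \<le> 4 * s^2" .
  then have "4 / (4 * s^2) \<le> 4 / ((\<bar>real_of_int (fst p)\<bar> + 1) * (\<bar>real_of_int (snd p)\<bar> + 1))"
    using \<open>1 \<le> s\<close> by (intro divide_left_mono) (auto intro!: mult_pos_pos)
  then show ?thesis
    unfolding s_def by simp
qed

lemma sum_lattice_box_weight_le:
  assumes "0 \<le> r"
  shows "(\<Sum>p\<in>lattice_box 0 r. 4 / ((\<bar>real_of_int (fst p)\<bar> + 1) * (\<bar>real_of_int (snd p)\<bar> + 1)))
    \<le> 4 * log_factor r"
proof -
  define h where "h t = 1 / (\<bar>real_of_int t\<bar> + 1)" for t :: int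
  have "(\<Sum>p\<in>lattice_box 0 r. 4 / ((\<bar>real_of_int (fst p)\<bar> + 1) * (\<bar>real_of_int (snd p)\<bar> + 1)))
      = 4 * (\<Sum>p\<in>int_cball 0 r \<times> int_cball 0 r. h (fst p) * h (snd p))"
    unfolding lattice_box_def h_def by (simp add: sum_distrib_left)
  also have "\<dots> = 4 * (\<Sum>t\<in>int_cball 0 r. h t)^2"
    unfolding power2_eq_square by (simp only: sum_product sum.cartesian_product) (simp add: case_prod_beta)
  also have "\<dots> \<le> 4 * log_factor r"
    unfolding log_factor_def h_def using assms sum_inverse_abs_add_one_int_cball_le[of r]
    by (auto intro!: power_mono sum_nonneg)
  finally show ?thesis .
qed

lemma sum_inverse_supnorm_sq_le:
  assumes "finite P" "0 \<notin> P" "0 < r"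
  shows "(\<Sum>p\<in>P. 1 / real_of_int (supnorm p)^2) \<le> 4 * log_factor r + card P / r^2"
proof -
  define B where "B = lattice_box 0 r"
  define w where "w p = 4 / ((\<bar>real_of_int (fst p)\<bar> + 1) * (\<bar>real_of_int (snd p)\<bar> + 1))" for p :: pt
  have "(\<Sum>p\<in>P. 1 / real_of_int (supnorm p)^2) \<le> (\<Sum>p\<in>P. (if p \<in> B then w p else 0) + 1 / r^2)"
  proof (rule sum_mono)
    fix p assume "p \<in> P"
    then have "p \<noteq> 0"
      using assms(2) by auto
    show "1 / real_of_int (supnorm p)^2 \<le> (if p \<in> B then w p else 0) + 1 / r^2"
    proof (cases "p \<in> B")
      case True
      then show ?thesis
        using inverse_supnorm_sq_le[OF \<open>p \<noteq> 0\<close>] unfolding w_def by (simp add: add_increasing2)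
    next
      case False
      then have "r \<le> real_of_int (supnorm p)"
        unfolding B_def mem_lattice_box supnorm_def by auto
      then have "1 / real_of_int (supnorm p)^2 \<le> 1 / r^2"
        using assms(3) by (intro divide_left_mono power_mono) auto
      with False show ?thesis
        by simp
    qed
  qed
  also have "\<dots> = (\<Sum>p\<in>P \<inter> B. w p) + card P / r^2"
    using assms(1) by (simp add: sum.distrib sum.inter_restrict)
  also have "(\<Sum>p\<in>P \<inter> B. w p) \<le> (\<Sum>p\<in>B. w p)"
    by (rule sum_mono2) (auto simp: B_def w_def)
  also have "(\<Sum>p\<in>B. w p) \<le> 4 * log_factor r"
    unfolding B_def w_def using assms(3) by (intro sum_lattice_box_weight_le) simp
  finally show ?thesis
    by simp
qed

lemma sum_line_density_le_sum_primitive_parts: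
  assumes "0 \<le> r"
  shows "(\<Sum>x\<in>lattice_box c r - {0}. line_density x)
    \<le> (\<Sum>p\<in>primitive_part ` (lattice_box c r - {0}). (2 * r / supnorm p + 1) / supnorm p)"
proof -
  define B where "B = lattice_box c r - {0}"
  define s where "s p = real_of_int (supnorm p)" for p
  have s_ge_1: "1 \<le> s (primitive_part x)" if "x \<in> B" for x
    using that supnorm_primitive_part_ge_1 unfolding B_def s_def by auto
  have "(\<Sum>x\<in>B. line_density x) = (\<Sum>x\<in>B. 1 / s (primitive_part x))"
    by (rule sum.cong) (simp_all add: B_def line_density_eq_inverse_supnorm s_def)
  also have "\<dots> = (\<Sum>p\<in>primitive_part ` B. \<Sum>x\<in>{x \<in> B. primitive_part x = p}. 1 / s (primitive_part x))"
    unfolding B_def by (rule sum.image_gen) simp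
  also have "\<dots> = (\<Sum>p\<in>primitive_part ` B. real (card {x \<in> B. primitive_part x = p}) / s p)"
    by (rule sum.cong) auto
  also have "\<dots> \<le> (\<Sum>p\<in>primitive_part ` B. (2 * r / s p + 1) / s p)"
  proof (rule sum_mono, rule divide_right_mono)
    fix p assume "p \<in> primitive_part ` B"
    then obtain x where "x \<in> B" "p = primitive_part x"
      by blast
    then have "1 \<le> s p"
      using s_ge_1 by simp
    then have "p \<noteq> 0" "0 \<le> s p"
      by (auto simp: s_def supnorm_def)
    then show "real (card {x \<in> B. primitive_part x = p}) \<le> 2 * r / s p + 1"
      using card_primitive_part_fibre_le[of p r c] assms unfolding B_def s_def by auto
    show "0 \<le> s p"
      by fact
  qed
  finally show ?thesis
    unfolding B_def s_def .
qed

lemma amgm_inverse_le: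
  fixes r s :: real
  assumes "0 < r" "0 < s"
  shows "(2 * r / s + 1) / s \<le> 5 / 2 * r / s^2 + 1 / (2 * r)"
proof -
  have "0 \<le> (r - s)^2 / (2 * r * s^2)"
    using assms by simp
  also have "\<dots> = 5 / 2 * r / s^2 + 1 / (2 * r) - (2 * r / s + 1) / s"
    using assms by (simp add: field_simps power2_eq_square)
  finally show ?thesis
    by simp
qed

lemma sum_line_density_le:
  assumes "1 \<le> r"
  shows "(\<Sum>x\<in>lattice_box c r - {0}. line_density x) \<le> 37 * r * log_factor r"
proof -
  define P where "P = primitive_part ` (lattice_box c r - {0})"
  define s where "s p = real_of_int (supnorm p)" for p
  have "finite P"
    unfolding P_def by simp
  have s_ge_1: "1 \<le> s p" if "p \<in> P" for p
    using that supnorm_primitive_part_ge_1 unfolding P_def s_def by auto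
  then have "0 \<notin> P"
    unfolding s_def supnorm_def by fastforce
  have "card P \<le> card (lattice_box c r)"
    unfolding P_def by (meson Diff_subset card_image_le card_mono finite_Diff finite_lattice_box le_trans)
  then have card_P: "real (card P) \<le> 9 * r^2"
    using card_lattice_box_le[OF assms, of c] by linarith
  have "(\<Sum>x\<in>lattice_box c r - {0}. line_density x) \<le> (\<Sum>p\<in>P. (2 * r / s p + 1) / s p)"
    unfolding P_def s_def using assms by (intro sum_line_density_le_sum_primitive_parts) simp
  \<comment> \<open>AM-GM pays for the \<open>+ 1\<close>, which matters for the directions of large norm.\<close>
  also have "\<dots> \<le> (\<Sum>p\<in>P. 5 / 2 * r / s p^2 + 1 / (2 * r))"
  proof (rule sum_mono)
    fix p assume "p \<in> P"
    then show "(2 * r / s p + 1) / s p \<le> 5 / 2 * r / s p^2 + 1 / (2 * r)"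
      using assms s_ge_1[OF \<open>p \<in> P\<close>] by (intro amgm_inverse_le) auto
  qed
  also have "\<dots> = 5 / 2 * r * (\<Sum>p\<in>P. 1 / s p^2) + card P / (2 * r)"
    by (simp add: sum.distrib sum_distrib_left)
  also have "\<dots> \<le> 5 / 2 * r * (4 * log_factor r + card P / r^2) + card P / (2 * r)"
    using sum_inverse_supnorm_sq_le[OF \<open>finite P\<close> \<open>0 \<notin> P\<close>, of r] assms unfolding s_def by simp
  also have "\<dots> = 10 * r * log_factor r + 3 * (card P / r^2) * r"
    using assms by (simp add: field_simps power2_eq_square)
  also have "\<dots> \<le> 10 * r * log_factor r + 27 * r"
    using card_P assms by (simp add: field_simps)
  also have "\<dots> \<le> 10 * r * log_factor r + 27 * r * log_factor r"
    using assms log_factor_ge_1[of r] by simp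
  finally show ?thesis
    by simp
qed

lemma sum_line_density_translate_le:
  assumes "1 \<le> r"
  shows "(\<Sum>a\<in>lattice_box d r - {n}. line_density (a - n)) \<le> 37 * r * log_factor r"
proof -
  have "(\<Sum>a\<in>lattice_box d r - {n}. line_density (a - n))
      = (\<Sum>w\<in>(\<lambda>a. a - n) ` (lattice_box d r - {n}). line_density w)"
    by (simp add: sum.reindex inj_on_def)
  also have "(\<lambda>a. a - n) ` (lattice_box d r - {n}) = lattice_box (d - n) r - {0}"
    by (simp add: image_set_diff inj_on_def image_diff_lattice_box)
  also have "(\<Sum>w\<in>lattice_box (d - n) r - {0}. line_density w) \<le> 37 * r * log_factor r"
    using assms by (rule sum_line_density_le)
  finally show ?thesis .
qed

section \<open>Point-line incidences and hyperbola collisions\<close>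

lemma card_point_line_incidences_le:
  fixes S :: "(pt \<times> pt) set" and k :: "pt \<Rightarrow> int"
  assumes "0 \<le> R" "1 \<le> r"
    and S: "S \<subseteq> (SIGMA a:lattice_box d r - {n}. {b \<in> lattice_box c R. hdot (a - n) b = k a})"
  shows "real (card S) \<le> 83 * max R r * r * log_factor r"
proof -
  define A where "A = lattice_box d r - {n}"
  define L where "L a = {b \<in> lattice_box c R. hdot (a - n) b = k a}" for a
  have "card S \<le> card (Sigma A L)"
    using S unfolding A_def L_def by (intro card_mono) auto
  also have "\<dots> = (\<Sum>a\<in>A. card (L a))"
    unfolding A_def L_def by (intro card_SigmaI) auto
  finally have "real (card S) \<le> (\<Sum>a\<in>A. real (card (L a)))"
    by (metis of_nat_le_iff of_nat_sum)
  also have "\<dots> \<le> (\<Sum>a\<in>A. 1 + 2 * R * line_density (a - n))"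
    unfolding L_def A_def using assms(1) by (intro sum_mono card_hdot_line_lattice_box_le) auto
  also have "\<dots> = card A + 2 * R * (\<Sum>a\<in>A. line_density (a - n))"
    by (simp add: sum.distrib sum_distrib_left)
  also have "real (card A) \<le> 9 * r^2"
    unfolding A_def using card_lattice_box_le[OF assms(2), of d] card_Diff1_le[of "lattice_box d r" n]
    by (meson finite_lattice_box le_trans of_nat_le_iff order_trans)
  also have "(\<Sum>a\<in>A. line_density (a - n)) \<le> 37 * r * log_factor r"
    unfolding A_def using assms(2) by (rule sum_line_density_translate_le)
  finally have "real (card S) \<le> 9 * r^2 + 74 * R * r * log_factor r"
    using assms(1) by (simp add: mult_left_mono)
  moreover have "r^2 \<le> max R r * r * log_factor r"
    using mult_mono[of r "max R r" r "r * log_factor r"] assms log_factor_ge_1[of r]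
    by (simp add: power2_eq_square mult.assoc)
  moreover have "R * r * log_factor r \<le> max R r * r * log_factor r"
    using assms log_factor_ge_1[of r] by (intro mult_right_mono) auto
  ultimately show ?thesis
    by linarith
qed

lemma card_hmod2_collisions_off_diagonal_le:
  assumes "1 \<le> r"
  shows "real (card {(u, v) \<in> lattice_box c r \<times> lattice_box c r. u \<noteq> v \<and> hmod2 (u - n) = hmod2 (v - n)})
    \<le> 332 * r^2 * log_factor (2 * r)"
proof -
  define E where "E = {(u, v) \<in> lattice_box c r \<times> lattice_box c r. u \<noteq> v \<and> hmod2 (u - n) = hmod2 (v - n)}"
  define \<phi> where "\<phi> p = (fst p - snd p, snd p)" for p :: "pt \<times> pt"
  have "inj_on \<phi> E"
    unfolding \<phi>_def by (rule inj_onI) (auto simp: prod_eq_iff)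
  \<comment> \<open>Given the difference \<open>u - v\<close>, the collision condition is linear in \<open>v\<close>.\<close>
  have "\<phi> ` E \<subseteq> (SIGMA y:lattice_box 0 (2 * r) - {0}.
      {x \<in> lattice_box c r. hdot (y - 0) x = (2 * hdot y n - hmod2 y) div 2})"
  proof
    fix p assume "p \<in> \<phi> ` E"
    then obtain u v where "(u, v) \<in> E" "p = (u - v, v)"
      unfolding \<phi>_def by auto
    then have uv: "u \<in> lattice_box c r" "v \<in> lattice_box c r" "u \<noteq> v"
      "hmod2 ((u - v) + (v - n)) = hmod2 (v - n)"
      unfolding E_def by auto
    have "u - v \<in> lattice_box 0 (2 * r)"
      using diff_mem_lattice_box[OF uv(1,2)] by simp
    moreover have double: "2 * hdot (u - v) v = 2 * hdot (u - v) n - hmod2 (u - v)"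
      using uv(4) unfolding hmod2_add hdot_diff_right by simp
    then have "hdot (u - v) v = (2 * hdot (u - v) n - hmod2 (u - v)) div 2"
      by (simp flip: double)
    ultimately show "p \<in> (SIGMA y:lattice_box 0 (2 * r) - {0}.
        {x \<in> lattice_box c r. hdot (y - 0) x = (2 * hdot y n - hmod2 y) div 2})"
      using uv \<open>p = (u - v, v)\<close> by simp
  qed
  then have "real (card (\<phi> ` E)) \<le> 83 * max r (2 * r) * (2 * r) * log_factor (2 * r)"
    using assms by (intro card_point_line_incidences_le) auto
  then show ?thesis
    using \<open>inj_on \<phi> E\<close> assms unfolding E_def by (simp add: card_image max_def power2_eq_square)
qed

lemma card_hmod2_collisions_le:
  assumes "1 \<le> r"
  shows "real (card {(u, v) \<in> lattice_box c r \<times> lattice_box c r. hmod2 (u - n) = hmod2 (v - n)})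
    \<le> 341 * r^2 * log_factor (2 * r)"
proof -
  define E where "E = {(u, v) \<in> lattice_box c r \<times> lattice_box c r. u \<noteq> v \<and> hmod2 (u - n) = hmod2 (v - n)}"
  have "{(u, v) \<in> lattice_box c r \<times> lattice_box c r. hmod2 (u - n) = hmod2 (v - n)}
      \<subseteq> (\<lambda>u. (u, u)) ` lattice_box c r \<union> E"
    unfolding E_def by auto
  moreover have "finite E"
    unfolding E_def by (rule finite_subset[of _ "lattice_box c r \<times> lattice_box c r"]) auto
  ultimately have "card {(u, v) \<in> lattice_box c r \<times> lattice_box c r. hmod2 (u - n) = hmod2 (v - n)}
      \<le> card ((\<lambda>u. (u, u)) ` lattice_box c r \<union> E)"
    by (intro card_mono) auto
  also have "\<dots> \<le> card ((\<lambda>u. (u, u)) ` lattice_box c r) + card E"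
    by (rule card_Un_le)
  also have "card ((\<lambda>u. (u, u)) ` lattice_box c r) = card (lattice_box c r)"
    by (simp add: card_image inj_on_def)
  finally have "real (card {(u, v) \<in> lattice_box c r \<times> lattice_box c r. hmod2 (u - n) = hmod2 (v - n)})
      \<le> 9 * r^2 + 332 * r^2 * log_factor (2 * r)"
    using card_lattice_box_le[OF assms, of c] card_hmod2_collisions_off_diagonal_le[OF assms, of c n]
    unfolding E_def by linarith
  also have "\<dots> \<le> 341 * r^2 * log_factor (2 * r)"
    using assms log_factor_ge_1[of "2 * r"] by simp
  finally show ?thesis .
qed

lemma card_fibre_product_eq_sum:
  assumes "finite U" "finite V" "finite W" "f ` U \<subseteq> W"
  shows "card {(u, v) \<in> U \<times> V. f u = g v} = (\<Sum>w\<in>W. card {u \<in> U. f u = w} * card {v \<in> V. g v = w})"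
proof -
  have "{(u, v) \<in> U \<times> V. f u = g v} = (\<Union>w\<in>W. {u \<in> U. f u = w} \<times> {v \<in> V. g v = w})"
    using assms(4) by auto
  also have "card \<dots> = (\<Sum>w\<in>W. card ({u \<in> U. f u = w} \<times> {v \<in> V. g v = w}))"
    using assms(1-3) by (intro card_UN_disjoint) auto
  finally show ?thesis
    by (simp add: card_cartesian_product)
qed

lemma card_fibre_product_sq_le:
  assumes "finite U" "finite V"
  shows "real (card {(u, v) \<in> U \<times> V. f u = g v})^2
    \<le> real (card {(u, u') \<in> U \<times> U. f u = f u'}) * real (card {(v, v') \<in> V \<times> V. g v = g v'})"
proof -
  define W where "W = f ` U \<union> g ` V"
  define \<alpha> where "\<alpha> w = real (card {u \<in> U. f u = w})" for w
  define \<beta> where "\<beta> w = real (card {v \<in> V. g v = w})" for w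
  have "finite W"
    unfolding W_def using assms by simp
  have "card {(u, v) \<in> U \<times> V. f u = g v} = (\<Sum>w\<in>W. card {u \<in> U. f u = w} * card {v \<in> V. g v = w})"
    using assms \<open>finite W\<close> by (intro card_fibre_product_eq_sum) (auto simp: W_def)
  then have "real (card {(u, v) \<in> U \<times> V. f u = g v}) = (\<Sum>w\<in>W. \<alpha> w * \<beta> w)"
    unfolding \<alpha>_def \<beta>_def by simp
  moreover have "card {(u, u') \<in> U \<times> U. f u = f u'} = (\<Sum>w\<in>W. card {u \<in> U. f u = w} * card {u \<in> U. f u = w})"
    using assms \<open>finite W\<close> by (intro card_fibre_product_eq_sum) (auto simp: W_def)
  then have "real (card {(u, u') \<in> U \<times> U. f u = f u'}) = (\<Sum>w\<in>W. (\<alpha> w)^2)"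
    unfolding \<alpha>_def power2_eq_square by simp
  moreover have "card {(v, v') \<in> V \<times> V. g v = g v'} = (\<Sum>w\<in>W. card {v \<in> V. g v = w} * card {v \<in> V. g v = w})"
    using assms \<open>finite W\<close> by (intro card_fibre_product_eq_sum) (auto simp: W_def)
  then have "real (card {(v, v') \<in> V \<times> V. g v = g v'}) = (\<Sum>w\<in>W. (\<beta> w)^2)"
    unfolding \<beta>_def power2_eq_square by simp
  ultimately show ?thesis
    by (simp add: Cauchy_Schwarz_ineq_sum)
qed

section \<open>Counting the resonant set\<close>

lemma card_hdot_level_pairs_le:
  assumes "A \<subseteq> lattice_box c r" "B \<subseteq> lattice_box d R" "1 \<le> r" "r \<le> R"
  shows "real (card {(x, y). x \<noteq> n \<and> y \<noteq> n \<and> 2 * hdot (x - n) (y - n) = \<mu> \<and> x \<in> A \<and> y \<in> B})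
    \<le> 83 * R * r * log_factor r"
proof -
  have "{(x, y). x \<noteq> n \<and> y \<noteq> n \<and> 2 * hdot (x - n) (y - n) = \<mu> \<and> x \<in> A \<and> y \<in> B}
      \<subseteq> (SIGMA x:lattice_box c r - {n}. {y \<in> lattice_box d R. hdot (x - n) y = \<mu> div 2 + hdot (x - n) n})"
    using assms(1,2) by (auto simp: hdot_diff_right)
  from card_point_line_incidences_le[OF _ assms(3) this] assms(3,4)
  show ?thesis
    by (simp add: max_def)
qed

lemma card_Gamma_minus_n1_n3_le:
  assumes "A1 \<subseteq> lattice_box c1 r1" "A3 \<subseteq> lattice_box c3 r3" "1 \<le> r1" "1 \<le> r3"
  shows "real (card {(n1, n2, n3) \<in> Gamma_minus \<mu> n. n1 \<in> A1 \<and> n3 \<in> A3})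
    \<le> 83 * r1 * r3 * log_factor (max r1 r3)"
proof -
  define T where "T A B = {(x, y). x \<noteq> n \<and> y \<noteq> n \<and> 2 * hdot (x - n) (y - n) = \<mu> \<and> x \<in> A \<and> y \<in> B}"
    for A B
  have swap: "card (T A3 A1) = card (T A1 A3)"
  proof -
    have "T A3 A1 = prod.swap ` T A1 A3"
      unfolding T_def by (auto simp: hdot_commute)
    then show ?thesis
      by (simp add: card_image)
  qed
  have "real (card (T A1 A3)) \<le> 83 * r1 * r3 * log_factor (max r1 r3)"
  proof (cases "r1 \<le> r3")
    case True
    have "real (card (T A1 A3)) \<le> 83 * r3 * r1 * log_factor r1"
      unfolding T_def using assms True by (intro card_hdot_level_pairs_le) auto
    also have "\<dots> \<le> 83 * r1 * r3 * log_factor (max r1 r3)"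
      using assms by (simp add: log_factor_mono)
    finally show ?thesis .
  next
    case False
    have "real (card (T A3 A1)) \<le> 83 * r1 * r3 * log_factor r3"
      unfolding T_def using assms False by (intro card_hdot_level_pairs_le) auto
    also have "\<dots> \<le> 83 * r1 * r3 * log_factor (max r1 r3)"
      using assms by (simp add: log_factor_mono)
    finally show ?thesis
      unfolding swap .
  qed
  then show ?thesis
    unfolding card_Gamma_minus_eq_n1_n3 T_def .
qed

lemma card_hmod2_shifted_pairs_le:
  assumes "1 \<le> R" "1 \<le> r"
  shows "real (card {(u, v) \<in> lattice_box c R \<times> lattice_box d r. hmod2 (u - n) + m = hmod2 (v - n)})
    \<le> 341 * R * r * log_factor (2 * max R r)"
proof -
  define L where "L = log_factor (2 * max R r)"
  have L: "log_factor (2 * R) \<le> L" "log_factor (2 * r) \<le> L" "0 \<le> log_factor (2 * R)" "0 \<le> log_factor (2 * r)"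
    unfolding L_def using assms log_factor_ge_1[of "2 * R"] log_factor_ge_1[of "2 * r"]
    by (simp_all add: log_factor_mono)
  have "real (card {(u, v) \<in> lattice_box c R \<times> lattice_box d r. hmod2 (u - n) + m = hmod2 (v - n)})^2
      \<le> real (card {(u, u') \<in> lattice_box c R \<times> lattice_box c R. hmod2 (u - n) + m = hmod2 (u' - n) + m})
        * real (card {(v, v') \<in> lattice_box d r \<times> lattice_box d r. hmod2 (v - n) = hmod2 (v' - n)})"
    by (rule card_fibre_product_sq_le) simp_all
  also have "\<dots> \<le> (341 * R^2 * log_factor (2 * R)) * (341 * r^2 * log_factor (2 * r))"
    using assms L(3,4) by (simp only: add_right_cancel) (intro mult_mono card_hmod2_collisions_le; simp)
  also have "\<dots> \<le> (341 * R^2 * L) * (341 * r^2 * L)"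
    using L by (intro mult_mono mult_left_mono) simp_all
  also have "\<dots> = (341 * R * r * L)^2"
    by (simp add: power2_eq_square)
  finally have "real (card {(u, v) \<in> lattice_box c R \<times> lattice_box d r. hmod2 (u - n) + m = hmod2 (v - n)})^2
      \<le> (341 * R * r * L)^2" .
  moreover have "0 \<le> 341 * R * r * L"
    using assms L(1,3) by simp
  ultimately show ?thesis
    unfolding L_def[symmetric] by (rule power2_le_imp_le)
qed

lemma card_hdot_quadratic_pairs_le:
  assumes "A \<subseteq> lattice_box c R" "B \<subseteq> lattice_box d r" "1 \<le> r" "r \<le> R"
  shows "real (card {(x, y). 2 * hdot (x - n) (y - x) = \<mu> \<and> x \<in> A \<and> y \<in> B})
    \<le> 1023 * R * r * log_factor (6 * R)"
proof -
  define T where "T = {(x, y). 2 * hdot (x - n) (y - x) = \<mu> \<and> x \<in> A \<and> y \<in> B}"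
  define H where "H = {(u, v) \<in> lattice_box (c + (c - d)) (R + (R + r)) \<times> lattice_box d r.
    hmod2 (u - n) + 2 * \<mu> = hmod2 (v - n)}"
  \<comment> \<open>For fixed \<open>y\<close> the constraint is quadratic in \<open>x\<close>; the substitution \<open>u = 2 x - y\<close>
    turns it into the pair of hyperbolas \<open>hmod2 (u - n) + 2 \<mu> = hmod2 (y - n)\<close>.\<close>
  define \<psi> where "\<psi> p = (fst p + (fst p - snd p), snd p)" for p :: "pt \<times> pt"
  have "inj_on \<psi> T"
    unfolding \<psi>_def by (rule inj_onI) (auto simp: prod_eq_iff)
  have "\<psi> ` T \<subseteq> H"
  proof
    fix p assume "p \<in> \<psi> ` T"
    then obtain x y where xy: "p = (x + (x - y), y)" "x \<in> A" "y \<in> B" "2 * hdot (x - n) (y - x) = \<mu>"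
      unfolding \<psi>_def T_def by auto
    have "hmod2 ((x - n) + (y - x)) - hmod2 ((x - n) - (y - x)) = 2 * \<mu>"
      unfolding hmod2_add_minus_diff using xy(4) by simp
    moreover have "(x - n) + (y - x) = y - n" "(x - n) - (y - x) = x + (x - y) - n"
      by (simp_all add: algebra_simps)
    moreover have "x + (x - y) \<in> lattice_box (c + (c - d)) (R + (R + r))"
      using xy(2,3) assms(1,2) by (intro add_mem_lattice_box diff_mem_lattice_box) auto
    ultimately show "p \<in> H"
      unfolding H_def using xy assms(2) by auto
  qed
  then have "card (\<psi> ` T) \<le> card H"
    unfolding H_def by (rule card_mono[rotated]) (auto intro: finite_subset[of _ "lattice_box _ _ \<times> lattice_box _ _"])
  also have "real (card H) \<le> 341 * (R + (R + r)) * r * log_factor (2 * max (R + (R + r)) r)"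
    unfolding H_def using assms by (intro card_hmod2_shifted_pairs_le) auto
  also have "\<dots> \<le> 341 * (3 * R) * r * log_factor (6 * R)"
    using assms by (intro mult_log_factor_mono) (auto simp: max_def)
  finally show ?thesis
    using \<open>inj_on \<psi> T\<close> unfolding T_def by (simp add: card_image)
qed

lemma card_Gamma_minus_n1_n2_le:
  assumes "A1 \<subseteq> lattice_box c1 r1" "A2 \<subseteq> lattice_box c2 r2" "1 \<le> r1" "1 \<le> r2"
  shows "real (card {(n1, n2, n3) \<in> Gamma_minus \<mu> n. n1 \<in> A1 \<and> n2 \<in> A2})
    \<le> 1023 * r1 * r2 * log_factor (6 * max r1 r2)"
proof -
  define T where "T = {(x, y). x \<noteq> n \<and> y \<noteq> x \<and> 2 * hdot (x - n) (y - x) = \<mu> \<and> x \<in> A1 \<and> y \<in> A2}"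
  have "real (card T) \<le> 1023 * r1 * r2 * log_factor (6 * max r1 r2)"
  proof (cases "r1 \<le> r2")
    case True
    have "T \<subseteq> (SIGMA x:lattice_box c1 r1 - {n}. {y \<in> lattice_box c2 r2. hdot (x - n) y = \<mu> div 2 + hdot (x - n) x})"
      unfolding T_def using assms(1,2) by (auto simp: hdot_diff_right)
    from card_point_line_incidences_le[OF _ assms(3) this] assms True
    have "real (card T) \<le> 83 * r2 * r1 * log_factor r1"
      by (simp add: max_def)
    also have "\<dots> \<le> 1023 * r1 * r2 * log_factor (6 * max r1 r2)"
      using mult_log_factor_mono[of "r1 * r2" 83 1023 r1 "6 * max r1 r2"] assms by (simp add: mult_ac)
    finally show ?thesis .
  next
    case False
    have "card T \<le> card {(x, y). 2 * hdot (x - n) (y - x) = \<mu> \<and> x \<in> A1 \<and> y \<in> A2}"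
      unfolding T_def using assms(1,2)
      by (intro card_mono) (auto intro: finite_subset[of _ "lattice_box c1 r1 \<times> lattice_box c2 r2"])
    also have "real \<dots> \<le> 1023 * r1 * r2 * log_factor (6 * r1)"
      using assms False by (intro card_hdot_quadratic_pairs_le) auto
    finally show ?thesis
      using False by (simp add: max_def)
  qed
  then show ?thesis
    unfolding card_Gamma_minus_eq_n1_n2 T_def by simp
qed

lemma dyadic_ge_1: "dyadic N \<Longrightarrow> 1 \<le> N"
  unfolding dyadic_def by auto

lemma sim_subset_lattice_box:
  assumes "dyadic N"
  shows "{m. sim m N} \<subseteq> lattice_box 0 (2 * N)"
proof
  fix m assume "m \<in> {m. sim m N}"
  then have "enorm m < 2 * N"
    using dyadic_ge_1[OF assms] unfolding sim_def by (auto split: if_splits)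
  moreover have "\<bar>real_of_int (fst m)\<bar> \<le> enorm m" "\<bar>real_of_int (snd m)\<bar> \<le> enorm m"
    unfolding enorm_def by (simp_all add: real_le_rsqrt)
  ultimately show "m \<in> lattice_box 0 (2 * N)"
    unfolding mem_lattice_box by simp
qed

lemma card_Gamma_minus_sim_n1_n3_le:
  assumes "dyadic N1" "dyadic N3"
  shows "real (card {(n1, n2, n3) \<in> Gamma_minus \<mu> n. sim n1 N1 \<and> sim n3 N3})
    \<le> 4092 * N1 * N3 * log_factor (12 * max N1 N3)"
proof -
  have "real (card {(n1, n2, n3) \<in> Gamma_minus \<mu> n. sim n1 N1 \<and> sim n3 N3})
      \<le> 83 * (2 * N1) * (2 * N3) * log_factor (max (2 * N1) (2 * N3))"
    using card_Gamma_minus_n1_n3_le[OF sim_subset_lattice_box[OF assms(1)] sim_subset_lattice_box[OF assms(2)]]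
      dyadic_ge_1[OF assms(1)] dyadic_ge_1[OF assms(2)] by simp
  also have "\<dots> \<le> 4092 * N1 * N3 * log_factor (12 * max N1 N3)"
    using mult_log_factor_mono[of "N1 * N3" 332 4092 "max (2 * N1) (2 * N3)" "12 * max N1 N3"]
      dyadic_ge_1[OF assms(1)] dyadic_ge_1[OF assms(2)] by (simp add: mult_ac max_def)
  finally show ?thesis .
qed

lemma card_Gamma_minus_sim_n1_n2_le:
  assumes "dyadic N1" "dyadic N2"
  shows "real (card {(n1, n2, n3) \<in> Gamma_minus \<mu> n. sim n1 N1 \<and> sim n2 N2})
    \<le> 4092 * N1 * N2 * log_factor (12 * max N1 N2)"
proof -
  have "real (card {(n1, n2, n3) \<in> Gamma_minus \<mu> n. sim n1 N1 \<and> sim n2 N2})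
      \<le> 1023 * (2 * N1) * (2 * N2) * log_factor (6 * max (2 * N1) (2 * N2))"
    using card_Gamma_minus_n1_n2_le[OF sim_subset_lattice_box[OF assms(1)] sim_subset_lattice_box[OF assms(2)]]
      dyadic_ge_1[OF assms(1)] dyadic_ge_1[OF assms(2)] by simp
  also have "\<dots> = 4092 * N1 * N2 * log_factor (12 * max N1 N2)"
    by (simp add: max_mult_distrib_left)
  finally show ?thesis .
qed

lemma log_factor_le_powr:
  assumes "1 \<le> M" "0 < \<theta>"
  shows "log_factor (12 * M) \<le> (9 + 4 / \<theta>)^2 * M powr \<theta>"
proof -
  define p where "p = M powr (\<theta> / 2)"
  have "1 \<le> p"
    unfolding p_def using assms by (simp add: ge_one_powr_ge_zero)
  have "\<theta> / 2 * ln M = ln p"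
    unfolding p_def using assms by (simp add: ln_powr)
  also have "\<dots> \<le> p"
    using ln_le_minus_one[of p] \<open>1 \<le> p\<close> by simp
  finally have "ln M \<le> 2 / \<theta> * p"
    using assms by (simp add: field_simps)
  have "ln (12 * M + 1) \<le> ln (16 * M)"
    using assms by simp
  also have "\<dots> = 4 * ln 2 + ln M"
    using assms ln_realpow[of 2 4] by (simp add: ln_mult)
  finally have "1 + 2 * ln (12 * M + 1) \<le> 9 + 4 / \<theta> * p"
    using ln_2_less_1 \<open>ln M \<le> 2 / \<theta> * p\<close> by simp
  also have "\<dots> \<le> (9 + 4 / \<theta>) * p"
    using \<open>1 \<le> p\<close> assms by (simp add: algebra_simps)
  finally have "log_factor (12 * M) \<le> ((9 + 4 / \<theta>) * p)^2"
    unfolding log_factor_def using assms by (intro power_mono) auto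
  also have "\<dots> = (9 + 4 / \<theta>)^2 * M powr \<theta>"
    unfolding p_def power_mult_distrib using assms by (simp add: powr_powr[symmetric] power2_eq_square flip: powr_add)
  finally show ?thesis .
qed

lemma mult_log_factor_le_powr:
  assumes "x \<le> K * N * N' * log_factor (12 * max N N')" "0 \<le> K" "1 \<le> N" "1 \<le> N'" "0 < \<theta>"
  shows "x \<le> K * (9 + 4 / \<theta>)^2 * N * N' * max N N' powr \<theta>"
proof -
  have "log_factor (12 * max N N') \<le> (9 + 4 / \<theta>)^2 * max N N' powr \<theta>"
    using assms by (intro log_factor_le_powr) auto
  then have "K * N * N' * log_factor (12 * max N N') \<le> K * N * N' * ((9 + 4 / \<theta>)^2 * max N N' powr \<theta>)"
    using assms by (intro mult_left_mono) auto
  with assms(1) show ?thesis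
    by (simp add: mult_ac)
qed

theorem lemma2p1:
  fixes \<theta> :: real
  assumes "\<theta> > 0"
  shows "\<exists>C > 0. \<forall>(n::pt) (\<mu>::int) (N1::real) (N2::real) (N3::real).
     dyadic N1 \<longrightarrow> dyadic N2 \<longrightarrow> dyadic N3 \<longrightarrow>
       real (card {(n1, n2, n3) \<in> Gamma_minus \<mu> n. sim n1 N1 \<and> sim n3 N3})
          \<le> C * N1 * N3 * max N1 N3 powr \<theta>
     \<and> real (card {(n1, n2, n3) \<in> Gamma_minus \<mu> n. sim n1 N1 \<and> sim n2 N2})
          \<le> C * N1 * N2 * max N1 N2 powr \<theta>"
proof (intro exI[of _ "4092 * (9 + 4 / \<theta>)^2"] conjI allI impI)
  have "0 < 9 + 4 / \<theta>"
    using assms by (simp add: add_pos_pos)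
  then show "0 < 4092 * (9 + 4 / \<theta>)^2"
    by simp
  fix n :: pt and \<mu> :: int and N1 N2 N3 :: real
  assume N: "dyadic N1" "dyadic N2" "dyadic N3"
  note N_ge_1 = dyadic_ge_1[OF N(1)] dyadic_ge_1[OF N(2)] dyadic_ge_1[OF N(3)]
  show "real (card {(n1, n2, n3) \<in> Gamma_minus \<mu> n. sim n1 N1 \<and> sim n3 N3})
      \<le> 4092 * (9 + 4 / \<theta>)^2 * N1 * N3 * max N1 N3 powr \<theta>"
    using card_Gamma_minus_sim_n1_n3_le[OF N(1,3)] N_ge_1 assms by (intro mult_log_factor_le_powr) auto
  show "real (card {(n1, n2, n3) \<in> Gamma_minus \<mu> n. sim n1 N1 \<and> sim n2 N2})
      \<le> 4092 * (9 + 4 / \<theta>)^2 * N1 * N2 * max N1 N2 powr \<theta>"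
    using card_Gamma_minus_sim_n1_n2_le[OF N(1,2)] N_ge_1 assms by (intro mult_log_factor_le_powr) auto
qed

end
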